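(* Let $n\ge1$ and $a_k(\rho)=\tfrac12(\rho^k+\rho^{-k})$. Let $\rho_n^*>1$ denote the unique root in $(1,\infty)$ of $a_{n+1}(\rho)-(n+1)a_1(\rho)=0$. Then $$\min_{z\in\mathcal{E}_\rho}|U_n(z)|=\begin{cases}\dfrac{\rho^{n+1}-\rho^{-n-1}}{\rho+\rho^{-1}}, & n\text{ odd},\ \rho>1,\\[2mm] \dfrac{\rho^{n+1}+\rho^{-n-1}}{\rho+\rho^{-1}}, & n\text{ even},\ \rho\ge\rho_n^*,\end{cases}$$ and in both cases the minimum is attained if and only if $z=\pm\tfrac{i}{2}(\rho-\rho^{-1})$.
   Context: $U_n$ is the Chebyshev polynomial of the second kind, $U_n(\cos\theta)=\sin((n+1)\theta)/\sin\theta$. The Bernstein ellipse is $\mathcal{E}_\rho=\{\tfrac12(u+u^{-1}): u=\rho e^{i\theta},\ 0\le\theta<2\pi\}$. *)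

theory Defs
  imports Complex_Main
begin

text \<open>Chebyshev polynomials of the second kind, via the standard three-term recurrence
  (equivalently U_n(cos t) = sin((n+1)t)/sin t).\<close>
fun chebU :: "nat \<Rightarrow> complex \<Rightarrow> complex" where
  "chebU 0 z = 1"
| "chebU (Suc 0) z = 2 * z"
| "chebU (Suc (Suc n)) z = 2 * z * chebU (Suc n) z - chebU n z"

definition bernstein_ellipse :: "real \<Rightarrow> complex set" where
  "bernstein_ellipse \<rho> =
     {(u + inverse u) / 2 | u. \<exists>\<theta>. 0 \<le> \<theta> \<and> \<theta> < 2 * pi \<and> u = complex_of_real \<rho> * cis \<theta>}"

definition a_coef :: "nat \<Rightarrow> real \<Rightarrow> real" where
  "a_coef k \<rho> = (\<rho> ^ k + inverse (\<rho> ^ k)) / 2"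

definition rho_star :: "nat \<Rightarrow> real" where
  "rho_star n = (THE \<rho>. 1 < \<rho> \<and> a_coef (Suc n) \<rho> - real (Suc n) * a_coef 1 \<rho> = 0)"

end

theory Submission
  imports Defs
begin

(* Write z = (u + 1/u)/2 with u = rho e^(i theta).  The recurrence gives
   U_n(z) (u - 1/u) = u^(n+1) - u^-(n+1), and |u^m - u^-m|^2 = (rho^m + rho^-m)^2 - 4 cos^2(m theta),
   so comparing |U_n(z)| with the claimed minimum t is a real trigonometric inequality in theta.
   For odd n, where t^2 (rho + 1/rho)^2 = (rho^(n+1) + rho^-(n+1))^2 - 4, it reduces to
   cos^2((n+1) theta) <= 1 + t^2 cos^2 theta.  For even n, where t = a_(n+1)(rho) / a_1(rho), it
   reduces to |cos((n+1) theta)| <= t |cos theta|, which follows from |cos(m theta)| <= m |cos theta|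
   for odd m together with t >= n + 1; the latter is exactly the condition rho >= rho_n^*, since
   a_(n+1) - (n+1) a_1 is increasing on (1, infinity).  In both cases equality forces cos theta = 0,
   i.e. z = +-i (rho - 1/rho)/2. *)

definition joukowski :: "complex \<Rightarrow> complex" where
  "joukowski u = (u + inverse u) / 2"

lemma chebU_joukowski:
  assumes "u \<noteq> 0"
  shows "chebU n (joukowski u) * (u - inverse u) = u ^ Suc n - inverse (u ^ Suc n)"
proof (induction n rule: induct_nat_012)
  case (ge2 k)
  have double: "2 * joukowski u = u + inverse u"
    by (simp add: joukowski_def)
  have "chebU (Suc (Suc k)) (joukowski u) * (u - inverse u)
      = 2 * joukowski u * (chebU (Suc k) (joukowski u) * (u - inverse u))
        - chebU k (joukowski u) * (u - inverse u)"
    by (simp add: algebra_simps)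
  also have "\<dots> = (u + inverse u) * (chebU (Suc k) (joukowski u) * (u - inverse u))
        - chebU k (joukowski u) * (u - inverse u)"
    by (simp only: double)
  also have "\<dots> = u ^ Suc (Suc (Suc k)) - inverse (u ^ Suc (Suc (Suc k)))"
    unfolding ge2 using assms by (simp add: field_simps)
  finally show ?case .
qed (use assms in \<open>simp_all add: joukowski_def field_simps power2_eq_square\<close>)

lemma joukowski_rcis:
  assumes "r \<noteq> 0"
  shows "joukowski (rcis r x) = Complex ((r + inverse r) / 2 * cos x) ((r - inverse r) / 2 * sin x)"
  unfolding joukowski_def rcis_inverse using assms by (simp add: complex_eq_iff field_simps)

lemma norm_rcis_minus_inverse_squared:
  assumes "r \<noteq> 0"
  shows "(cmod (rcis r x - inverse (rcis r x)))\<^sup>2 = (r + inverse r)\<^sup>2 - 4 * (cos x)\<^sup>2"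
proof -
  have "(cmod (rcis r x - inverse (rcis r x)))\<^sup>2
      = ((r - inverse r) * cos x)\<^sup>2 + ((r + inverse r) * sin x)\<^sup>2"
    by (simp add: cmod_power2 rcis_inverse divide_inverse algebra_simps)
  also have "\<dots> = (r - inverse r)\<^sup>2 * (cos x)\<^sup>2 + (r + inverse r)\<^sup>2 * (1 - (cos x)\<^sup>2)"
    by (simp add: power_mult_distrib sin_squared_eq)
  also have "\<dots> = (r + inverse r)\<^sup>2 - 4 * (cos x)\<^sup>2"
    using assms by (simp add: power2_eq_square field_simps)
  finally show ?thesis .
qed

lemma bernstein_ellipse_eq:
  "bernstein_ellipse \<rho> = (\<lambda>\<theta>. joukowski (rcis \<rho> \<theta>)) ` {0..<2 * pi}"
  unfolding bernstein_ellipse_def joukowski_def rcis_def by force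

lemma norm_chebU_joukowski_rcis_squared:
  assumes "\<rho> \<noteq> 0"
  shows "(cmod (chebU n (joukowski (rcis \<rho> \<theta>))))\<^sup>2 * ((\<rho> + inverse \<rho>)\<^sup>2 - 4 * (cos \<theta>)\<^sup>2)
       = (\<rho> ^ Suc n + inverse (\<rho> ^ Suc n))\<^sup>2 - 4 * (cos (real (Suc n) * \<theta>))\<^sup>2"
proof -
  let ?u = "rcis \<rho> \<theta>"
  have "cmod (chebU n (joukowski ?u)) * cmod (?u - inverse ?u)
      = cmod (?u ^ Suc n - inverse (?u ^ Suc n))"
    using chebU_joukowski[of ?u n] assms by (metis norm_mult rcis_eq_zero_iff)
  then have "(cmod (chebU n (joukowski ?u)))\<^sup>2 * (cmod (?u - inverse ?u))\<^sup>2
      = (cmod (rcis (\<rho> ^ Suc n) (real (Suc n) * \<theta>) - inverse (rcis (\<rho> ^ Suc n) (real (Suc n) * \<theta>))))\<^sup>2"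
    by (metis DeMoivre2 power_mult_distrib)
  then show ?thesis
    using assms by (simp add: norm_rcis_minus_inverse_squared)
qed

lemma plus_inverse_squared_gt_four_cos_squared:
  fixes \<rho> :: real
  assumes "0 < \<rho>" "\<rho> \<noteq> 1"
  shows "4 * (cos \<theta>)\<^sup>2 < (\<rho> + inverse \<rho>)\<^sup>2"
proof -
  have "0 < (\<rho> - inverse \<rho>)\<^sup>2"
    using assms by (simp add: field_simps square_eq_1_iff)
  also have "\<dots> = (\<rho> + inverse \<rho>)\<^sup>2 - 4"
    using assms by (simp add: power2_eq_square field_simps)
  finally show ?thesis
    using abs_square_le_1[of "cos \<theta>"] by simp
qed

lemma le_iff_sq_mult_le:
  fixes v t d s :: real
  assumes "0 \<le> v" "0 \<le> t" "0 < d" "v\<^sup>2 * d = s"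
  shows "t \<le> v \<longleftrightarrow> t\<^sup>2 * d \<le> s" and "v = t \<longleftrightarrow> t\<^sup>2 * d = s"
  using assms by (auto simp: power2_le_iff_abs_le power2_eq_iff_nonneg)

lemma norm_chebU_joukowski_ge_iff:
  fixes \<rho> \<theta> t :: real and n :: nat
  assumes "0 < \<rho>" "\<rho> \<noteq> 1" "0 \<le> t"
  defines "d \<equiv> (\<rho> + inverse \<rho>)\<^sup>2 - 4 * (cos \<theta>)\<^sup>2"
    and "s \<equiv> (\<rho> ^ Suc n + inverse (\<rho> ^ Suc n))\<^sup>2 - 4 * (cos (real (Suc n) * \<theta>))\<^sup>2"
  shows "t \<le> cmod (chebU n (joukowski (rcis \<rho> \<theta>))) \<longleftrightarrow> t\<^sup>2 * d \<le> s"
    and "cmod (chebU n (joukowski (rcis \<rho> \<theta>))) = t \<longleftrightarrow> t\<^sup>2 * d = s"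
proof -
  have "0 < d"
    using plus_inverse_squared_gt_four_cos_squared[OF assms(1,2), of \<theta>] by (simp add: d_def)
  moreover have "(cmod (chebU n (joukowski (rcis \<rho> \<theta>))))\<^sup>2 * d = s"
    using norm_chebU_joukowski_rcis_squared[of \<rho> n \<theta>] assms(1) by (simp add: d_def s_def)
  ultimately show "t \<le> cmod (chebU n (joukowski (rcis \<rho> \<theta>))) \<longleftrightarrow> t\<^sup>2 * d \<le> s"
    and "cmod (chebU n (joukowski (rcis \<rho> \<theta>))) = t \<longleftrightarrow> t\<^sup>2 * d = s"
    using le_iff_sq_mult_le[OF norm_ge_zero assms(3)] by blast+
qed

lemma abs_cos_add_two_mult_le:
  "\<bar>cos (real (k + 2) * a)\<bar> \<le> \<bar>cos (real k * a)\<bar> + 2 * \<bar>cos a\<bar>"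
proof -
  have "cos (real (k + 2) * a) = 2 * cos (real (k + 1) * a) * cos a - cos (real k * a)"
    using cos_add[of "real (k + 1) * a" a] cos_diff[of "real (k + 1) * a" a]
    by (simp add: algebra_simps)
  then have "\<bar>cos (real (k + 2) * a)\<bar> \<le> 2 * \<bar>cos (real (k + 1) * a)\<bar> * \<bar>cos a\<bar> + \<bar>cos (real k * a)\<bar>"
    by (metis abs_triangle_ineq4 abs_mult abs_numeral)
  moreover have "\<bar>cos (real (k + 1) * a)\<bar> * \<bar>cos a\<bar> \<le> \<bar>cos a\<bar>"
    by (simp add: mult_left_le_one_le)
  ultimately show ?thesis
    by linarith
qed

lemma abs_cos_odd_mult_le: "\<bar>cos (real (2 * j + 1) * a)\<bar> \<le> real (2 * j + 1) * \<bar>cos a\<bar>"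
proof (induction j)
  case (Suc j)
  then show ?case
    using abs_cos_add_two_mult_le[of "2 * j + 1" a] by (simp add: algebra_simps)
qed simp

lemma abs_cos_odd_mult_less:
  assumes "1 \<le> j" "cos a \<noteq> 0"
  shows "\<bar>cos (real (2 * j + 1) * a)\<bar> < real (2 * j + 1) * \<bar>cos a\<bar>"
  using assms(1)
proof (induction j rule: dec_induct)
  case base
  have "\<bar>4 * (cos a)\<^sup>2 - 3\<bar> < 3"
    using assms(2) abs_square_le_1[of "cos a"] by (simp add: abs_less_iff)
  moreover have "cos (real (2 * 1 + 1) * a) = cos a * (4 * (cos a)\<^sup>2 - 3)"
    using cos_treble_cos[of a] by (simp add: power2_eq_square power3_eq_cube algebra_simps)
  ultimately show ?case
    using assms(2) by (simp add: abs_mult)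
next
  case (step j)
  then show ?case
    using abs_cos_add_two_mult_le[of "2 * j + 1" a] by (simp add: algebra_simps)
qed

lemma cos_odd_mult_squared_le:
  assumes "odd m" "3 \<le> m" "real m \<le> t"
  shows "(cos (real m * \<theta>))\<^sup>2 \<le> (t * cos \<theta>)\<^sup>2"
    and "(cos (real m * \<theta>))\<^sup>2 = (t * cos \<theta>)\<^sup>2 \<longleftrightarrow> cos \<theta> = 0"
proof -
  obtain j where j: "m = 2 * j + 1"
    using assms(1) oddE by blast
  with assms(2) have "1 \<le> j"
    by simp
  have scale: "real m * \<bar>cos \<theta>\<bar> \<le> \<bar>t * cos \<theta>\<bar>"
    using assms(3) by (simp add: abs_mult mult_right_mono)
  have le: "\<bar>cos (real m * \<theta>)\<bar> \<le> \<bar>t * cos \<theta>\<bar>"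
    using abs_cos_odd_mult_le[of j \<theta>] scale by (simp add: j)
  have less: "\<bar>cos (real m * \<theta>)\<bar> < \<bar>t * cos \<theta>\<bar>" if "cos \<theta> \<noteq> 0"
    using abs_cos_odd_mult_less[OF \<open>1 \<le> j\<close> that] scale by (simp add: j)
  show "(cos (real m * \<theta>))\<^sup>2 \<le> (t * cos \<theta>)\<^sup>2"
    using le by (simp add: abs_le_square_iff)
  have "(cos (real m * \<theta>))\<^sup>2 = (t * cos \<theta>)\<^sup>2 \<longleftrightarrow> \<bar>cos (real m * \<theta>)\<bar> = \<bar>t * cos \<theta>\<bar>"
    by (simp add: power2_eq_iff abs_eq_iff)
  then show "(cos (real m * \<theta>))\<^sup>2 = (t * cos \<theta>)\<^sup>2 \<longleftrightarrow> cos \<theta> = 0"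
    using le less by (cases "cos \<theta> = 0") auto
qed

lemma cos_even_mult_squared_eq_1:
  assumes "even m" "cos \<theta> = 0"
  shows "(cos (real m * \<theta>))\<^sup>2 = 1"
proof -
  obtain i :: int where "\<theta> = i * pi + pi / 2"
    using assms(2) cos_zero_iff_int2 by blast
  moreover obtain k where "m = 2 * k"
    using assms(1) by blast
  ultimately have "real m * \<theta> = of_int (int k * (2 * i + 1)) * pi"
    by (simp add: algebra_simps)
  then have "sin (real m * \<theta>) = 0"
    using sin_zero_iff_int2 by blast
  then show ?thesis
    using sin_cos_squared_add[of "real m * \<theta>"] by simp
qed

lemma cos_eq_0_one_period: "{\<theta> \<in> {0..<2 * pi}. cos \<theta> = 0} = {pi / 2, 3 / 2 * pi}"
proof
  show "{\<theta> \<in> {0..<2 * pi}. cos \<theta> = 0} \<subseteq> {pi / 2, 3 / 2 * pi}"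
  proof
    fix \<theta>
    assume "\<theta> \<in> {\<theta> \<in> {0..<2 * pi}. cos \<theta> = 0}"
    then obtain i :: int where \<theta>: "\<theta> = i * pi + pi / 2" "0 \<le> \<theta>" "\<theta> < 2 * pi"
      using cos_zero_iff_int2 by auto
    then have "0 \<le> (of_int i + 1 / 2) * pi" "(of_int i + 1 / 2) * pi < 2 * pi"
      by (simp_all add: algebra_simps)
    then have "- 1 / 2 \<le> real_of_int i" "real_of_int i < 3 / 2"
      using pi_gt_zero by (simp_all add: zero_le_mult_iff)
    then have "i = 0 \<or> i = 1"
      by linarith
    then show "\<theta> \<in> {pi / 2, 3 / 2 * pi}"
      using \<theta>(1) by auto
  qed
  show "{pi / 2, 3 / 2 * pi} \<subseteq> {\<theta> \<in> {0..<2 * pi}. cos \<theta> = 0}"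
    using pi_gt_zero cos_3over2_pi by simp
qed

lemma joukowski_rcis_cos_eq_0:
  assumes "\<rho> \<noteq> 0"
  shows "(\<lambda>\<theta>. joukowski (rcis \<rho> \<theta>)) ` {\<theta> \<in> {0..<2 * pi}. cos \<theta> = 0}
       = {\<i> * complex_of_real ((\<rho> - inverse \<rho>) / 2), - \<i> * complex_of_real ((\<rho> - inverse \<rho>) / 2)}"
proof -
  define b where "b = (\<rho> - inverse \<rho>) / 2"
  have j: "joukowski (rcis \<rho> \<theta>) = Complex ((\<rho> + inverse \<rho>) / 2 * cos \<theta>) (b * sin \<theta>)" for \<theta>
    using joukowski_rcis[OF assms] by (simp add: b_def)
  have "joukowski (rcis \<rho> (pi / 2)) = \<i> * complex_of_real b"
    unfolding j by (simp add: complex_eq_iff)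
  moreover have "joukowski (rcis \<rho> (3 / 2 * pi)) = - \<i> * complex_of_real b"
    unfolding j cos_3over2_pi sin_3over2_pi by (simp add: complex_eq_iff)
  ultimately have "(\<lambda>\<theta>. joukowski (rcis \<rho> \<theta>)) ` {\<theta> \<in> {0..<2 * pi}. cos \<theta> = 0}
      = {\<i> * complex_of_real b, - \<i> * complex_of_real b}"
    unfolding cos_eq_0_one_period by simp
  then show ?thesis
    by (simp only: b_def)
qed

lemma norm_chebU_joukowski_ge_odd:
  assumes "odd n" "1 < \<rho>"
  defines "t \<equiv> (\<rho> ^ Suc n - inverse (\<rho> ^ Suc n)) / (\<rho> + inverse \<rho>)"
  shows "t \<le> cmod (chebU n (joukowski (rcis \<rho> \<theta>)))"
    and "cmod (chebU n (joukowski (rcis \<rho> \<theta>))) = t \<longleftrightarrow> cos \<theta> = 0"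
proof -
  define P where "P = \<rho> ^ Suc n"
  define B where "B = \<rho> + inverse \<rho>"
  define c where "c = cos \<theta>"
  define cm where "cm = cos (real (Suc n) * \<theta>)"
  have "0 < B"
    using assms(2) by (simp add: B_def add_pos_pos)
  have "1 < P"
    unfolding P_def using assms(2) by (intro one_less_power) simp_all
  have t: "t = (P - inverse P) / B"
    by (simp add: t_def P_def B_def)
  have t0: "0 < t"
  proof -
    have "inverse P < P"
      using \<open>1 < P\<close> by (meson inverse_less_1_iff less_trans zero_less_one)
    then show ?thesis
      using \<open>0 < B\<close> by (simp add: t)
  qed
  have "t\<^sup>2 * B\<^sup>2 = (P - inverse P)\<^sup>2"
    using \<open>0 < B\<close> by (simp add: t power_divide)
  also have "\<dots> = (P + inverse P)\<^sup>2 - 4"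
    using \<open>1 < P\<close> by (simp add: power2_eq_square field_simps)
  finally have gap: "(P + inverse P)\<^sup>2 - 4 * cm\<^sup>2 - t\<^sup>2 * (B\<^sup>2 - 4 * c\<^sup>2)
      = 4 * (1 - cm\<^sup>2) + 4 * (t * c)\<^sup>2"
    by (simp add: power_mult_distrib algebra_simps)
  have cm1: "cm\<^sup>2 \<le> 1"
    by (simp add: cm_def abs_square_le_1)
  have "0 < \<rho>" "\<rho> \<noteq> 1"
    using assms(2) by simp_all
  note compare = norm_chebU_joukowski_ge_iff[OF this less_imp_le[OF t0], where \<theta>=\<theta> and n=n,
      folded P_def B_def c_def cm_def]
  show "t \<le> cmod (chebU n (joukowski (rcis \<rho> \<theta>)))"
    unfolding compare(1) using gap cm1 zero_le_power2[of "t * c"] by argo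
  have "cmod (chebU n (joukowski (rcis \<rho> \<theta>))) = t \<longleftrightarrow> (1 - cm\<^sup>2) + (t * c)\<^sup>2 = 0"
    unfolding compare(2) using gap by argo
  also have "\<dots> \<longleftrightarrow> cm\<^sup>2 = 1 \<and> c = 0"
    using cm1 t0 by (auto simp: add_nonneg_eq_0_iff)
  also have "\<dots> \<longleftrightarrow> c = 0"
    using cos_even_mult_squared_eq_1[of "Suc n" \<theta>] assms(1) by (auto simp: c_def cm_def)
  finally show "cmod (chebU n (joukowski (rcis \<rho> \<theta>))) = t \<longleftrightarrow> cos \<theta> = 0"
    by (simp add: c_def)
qed

lemma norm_chebU_joukowski_ge_even:
  assumes "even n" "1 \<le> n" "1 < \<rho>" "real (Suc n) * a_coef 1 \<rho> \<le> a_coef (Suc n) \<rho>"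
  defines "t \<equiv> (\<rho> ^ Suc n + inverse (\<rho> ^ Suc n)) / (\<rho> + inverse \<rho>)"
  shows "t \<le> cmod (chebU n (joukowski (rcis \<rho> \<theta>)))"
    and "cmod (chebU n (joukowski (rcis \<rho> \<theta>))) = t \<longleftrightarrow> cos \<theta> = 0"
proof -
  define P where "P = \<rho> ^ Suc n"
  define B where "B = \<rho> + inverse \<rho>"
  define c where "c = cos \<theta>"
  define cm where "cm = cos (real (Suc n) * \<theta>)"
  have "0 < B"
    using assms(3) by (simp add: B_def add_pos_pos)
  have "0 < a_coef 1 \<rho>"
    using assms(3) by (simp add: a_coef_def add_pos_pos)
  then have tn: "real (Suc n) \<le> t"
    using assms(4) by (simp add: t_def a_coef_def pos_le_divide_eq)
  have "t\<^sup>2 * B\<^sup>2 = (P + inverse P)\<^sup>2"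
    using \<open>0 < B\<close> by (simp add: t_def P_def B_def power_divide)
  then have gap: "(P + inverse P)\<^sup>2 - 4 * cm\<^sup>2 - t\<^sup>2 * (B\<^sup>2 - 4 * c\<^sup>2) = 4 * ((t * c)\<^sup>2 - cm\<^sup>2)"
    by (simp add: power_mult_distrib algebra_simps)
  have "0 < \<rho>" "\<rho> \<noteq> 1" "0 \<le> t"
    using assms(3) tn by simp_all
  note compare = norm_chebU_joukowski_ge_iff[OF this, where \<theta>=\<theta> and n=n,
      folded P_def B_def c_def cm_def]
  have "odd (Suc n)" "3 \<le> Suc n"
    using assms(1,2) by auto
  note cos_bound = cos_odd_mult_squared_le[OF this tn, of \<theta>, folded c_def cm_def]
  have "t \<le> cmod (chebU n (joukowski (rcis \<rho> \<theta>))) \<longleftrightarrow> cm\<^sup>2 \<le> (t * c)\<^sup>2"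
    and "cmod (chebU n (joukowski (rcis \<rho> \<theta>))) = t \<longleftrightarrow> cm\<^sup>2 = (t * c)\<^sup>2"
    using compare gap by argo+
  with cos_bound show "t \<le> cmod (chebU n (joukowski (rcis \<rho> \<theta>)))"
    and "cmod (chebU n (joukowski (rcis \<rho> \<theta>))) = t \<longleftrightarrow> cos \<theta> = 0"
    by (simp_all add: c_def)
qed

lemma a_coef_has_real_derivative:
  assumes "0 < x"
  shows "(a_coef k has_real_derivative real k / 2 * (x ^ (k - 1) - inverse (x ^ (k + 1)))) (at x)"
proof -
  have a_coef: "a_coef k = (\<lambda>x. (x ^ k + inverse (x ^ k)) / 2)"
    by (simp add: fun_eq_iff a_coef_def)
  have deriv_eq: "real k / 2 * (x ^ (k - 1) - inverse (x ^ (k + 1)))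
      = (real k * x ^ (k - Suc 0) + - (real k * x ^ (k - Suc 0) * inverse ((x ^ k) ^ Suc (Suc 0)))) / 2"
  proof (cases k)
    case (Suc j)
    then show ?thesis
      using assms by (simp add: field_simps)
  qed simp
  show ?thesis
    unfolding a_coef deriv_eq using assms by (intro DERIV_cdivide DERIV_add DERIV_pow DERIV_inverse_fun) simp_all
qed

lemma a_coef_excess_strict_mono:
  assumes "2 \<le> m" "1 < x" "x < y"
  shows "a_coef m x - real m * a_coef 1 x < a_coef m y - real m * a_coef 1 y"
proof (rule DERIV_pos_imp_increasing[OF assms(3)])
  fix z assume "x \<le> z" "z \<le> y"
  then have "1 < z"
    using assms(2) by linarith
  define d where "d = real m / 2 * (z ^ (m - 1) - inverse (z ^ (m + 1)))
      - real m * (real 1 / 2 * (z ^ (1 - 1) - inverse (z ^ (1 + 1))))"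
  have "((\<lambda>x. a_coef m x - real m * a_coef 1 x) has_real_derivative d) (at z)"
    unfolding d_def using \<open>1 < z\<close> by (intro DERIV_diff DERIV_cmult a_coef_has_real_derivative) simp_all
  moreover have "0 < d"
  proof -
    have "1 < z ^ (m - 1)"
      using \<open>1 < z\<close> assms(1) by (intro one_less_power) auto
    moreover have "inverse (z ^ (m + 1)) < inverse (z ^ (1 + 1))"
      using \<open>1 < z\<close> assms(1) by (intro less_imp_inverse_less power_strict_increasing) auto
    ultimately have "0 < real m / 2 * ((z ^ (m - 1) - 1) + (inverse (z ^ (1 + 1)) - inverse (z ^ (m + 1))))"
      using assms(1) by (intro mult_pos_pos add_pos_pos) simp_all
    then show ?thesis
      by (simp add: d_def algebra_simps)
  qed
  ultimately show "\<exists>d. ((\<lambda>x. a_coef m x - real m * a_coef 1 x) has_real_derivative d) (at z) \<and> 0 < d"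
    by blast
qed

lemma a_coef_excess_has_root:
  assumes "2 \<le> m"
  shows "\<exists>r>1. a_coef m r - real m * a_coef 1 r = 0"
proof -
  define R where "R = real m + 1"
  have "real m * R + real m * inverse R \<le> R\<^sup>2"
    using assms by (simp add: R_def power2_eq_square field_simps)
  also have "\<dots> \<le> R ^ m"
    using assms by (intro power_increasing) (simp_all add: R_def)
  finally have "real m * (R + inverse R) \<le> R ^ m + inverse (R ^ m)"
    by (simp add: R_def distrib_left add_increasing2)
  then have "0 \<le> a_coef m R - real m * a_coef 1 R"
    by (simp add: a_coef_def)
  moreover have "a_coef m 1 - real m * a_coef 1 1 < 0"
    using assms by (simp add: a_coef_def)
  moreover have "continuous_on {1..R} (\<lambda>x. a_coef m x - real m * a_coef 1 x)"
    unfolding a_coef_def by (intro continuous_intros) auto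
  ultimately obtain r where r: "1 \<le> r" "a_coef m r - real m * a_coef 1 r = 0"
    using IVT'[of "\<lambda>x. a_coef m x - real m * a_coef 1 x" 1 0 R] by (auto simp: R_def)
  with \<open>a_coef m 1 - real m * a_coef 1 1 < 0\<close> have "r \<noteq> 1"
    by auto
  with r show ?thesis
    by (auto intro: exI[of _ r])
qed

lemma rho_star_root:
  assumes "1 \<le> n"
  shows "1 < rho_star n" and "a_coef (Suc n) (rho_star n) = real (Suc n) * a_coef 1 (rho_star n)"
proof -
  have "\<exists>!r. 1 < r \<and> a_coef (Suc n) r - real (Suc n) * a_coef 1 r = 0"
  proof (rule ex_ex1I)
    show "\<exists>r. 1 < r \<and> a_coef (Suc n) r - real (Suc n) * a_coef 1 r = 0"
      using a_coef_excess_has_root[of "Suc n"] assms by auto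
  next
    fix r s
    assume "1 < r \<and> a_coef (Suc n) r - real (Suc n) * a_coef 1 r = 0"
      and "1 < s \<and> a_coef (Suc n) s - real (Suc n) * a_coef 1 s = 0"
    then show "r = s"
      using a_coef_excess_strict_mono[of "Suc n" r s] a_coef_excess_strict_mono[of "Suc n" s r] assms
      by (cases r s rule: linorder_cases) auto
  qed
  from theI'[OF this] show "1 < rho_star n"
    and "a_coef (Suc n) (rho_star n) = real (Suc n) * a_coef 1 (rho_star n)"
    unfolding rho_star_def by auto
qed

lemma rho_star_le_imp:
  assumes "1 \<le> n" "rho_star n \<le> \<rho>"
  shows "1 < \<rho>" and "real (Suc n) * a_coef 1 \<rho> \<le> a_coef (Suc n) \<rho>"
proof -
  show "1 < \<rho>"
    using rho_star_root(1)[OF assms(1)] assms(2) by linarith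
  show "real (Suc n) * a_coef 1 \<rho> \<le> a_coef (Suc n) \<rho>"
  proof (cases "rho_star n = \<rho>")
    case False
    then show ?thesis
      using a_coef_excess_strict_mono[of "Suc n" "rho_star n" \<rho>] rho_star_root[OF assms(1)] assms
      by auto
  qed (use rho_star_root(2)[OF assms(1)] in simp)
qed

theorem mainTheorem6:
  fixes n :: nat and \<rho> :: real
  assumes "n \<ge> 1"
    and "(odd n \<and> 1 < \<rho>) \<or> (even n \<and> rho_star n \<le> \<rho>)"
  shows "(\<forall>z\<in>bernstein_ellipse \<rho>.
            (if odd n then (\<rho> ^ (n+1) - inverse (\<rho> ^ (n+1))) / (\<rho> + inverse \<rho>)
                      else (\<rho> ^ (n+1) + inverse (\<rho> ^ (n+1))) / (\<rho> + inverse \<rho>))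
            \<le> cmod (chebU n z))
       \<and> {z \<in> bernstein_ellipse \<rho>.
            cmod (chebU n z) =
            (if odd n then (\<rho> ^ (n+1) - inverse (\<rho> ^ (n+1))) / (\<rho> + inverse \<rho>)
                      else (\<rho> ^ (n+1) + inverse (\<rho> ^ (n+1))) / (\<rho> + inverse \<rho>))}
         = {\<i> * complex_of_real ((\<rho> - inverse \<rho>) / 2), - \<i> * complex_of_real ((\<rho> - inverse \<rho>) / 2)}"
proof -
  define t where "t = (if odd n then (\<rho> ^ (n+1) - inverse (\<rho> ^ (n+1))) / (\<rho> + inverse \<rho>)
                      else (\<rho> ^ (n+1) + inverse (\<rho> ^ (n+1))) / (\<rho> + inverse \<rho>))"
  have "1 < \<rho>"
    using assms rho_star_le_imp(1) by blast
  have key: "t \<le> cmod (chebU n (joukowski (rcis \<rho> \<theta>)))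
      \<and> (cmod (chebU n (joukowski (rcis \<rho> \<theta>))) = t \<longleftrightarrow> cos \<theta> = 0)" for \<theta>
  proof (cases "odd n")
    case True
    then show ?thesis
      using norm_chebU_joukowski_ge_odd[OF True \<open>1 < \<rho>\<close>, of \<theta>] by (simp add: t_def)
  next
    case False
    then have "real (Suc n) * a_coef 1 \<rho> \<le> a_coef (Suc n) \<rho>"
      using assms rho_star_le_imp(2) by blast
    then show ?thesis
      using norm_chebU_joukowski_ge_even[OF _ assms(1) \<open>1 < \<rho>\<close>, of \<theta>] False by (simp add: t_def)
  qed
  have "{z \<in> bernstein_ellipse \<rho>. cmod (chebU n z) = t}
      = (\<lambda>\<theta>. joukowski (rcis \<rho> \<theta>)) ` {\<theta> \<in> {0..<2 * pi}. cos \<theta> = 0}"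
    unfolding bernstein_ellipse_eq by (auto simp: key eq_commute[of t])
  then show ?thesis
    using key joukowski_rcis_cos_eq_0[of \<rho>] \<open>1 < \<rho>\<close>
    unfolding bernstein_ellipse_eq t_def[symmetric] by auto
qed

end
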